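(* Let $1<p<\infty$. Then the Banach space $\ell_p$ has the weak Cauchy subsequence property of order $p$ if and only if $p\ge 2$.
   Context: For $p\in[1,\infty]$, a sequence $(x_n)$ in a locally convex space $E$ is weakly $p$-summable if for every $\chi\in E'$ the sequence $(\chi(x_n))_n$ lies in $\ell_p$ (if $p<\infty$) or in $c_0$ (if $p=\infty$). A sequence $(x_n)$ is weakly $p$-Cauchy if for every pair of strictly increasing sequences $(k_n),(j_n)$ in $\omega=\{0,1,2,\dots\}$ the sequence $(x_{k_n}-x_{j_n})_n$ is weakly $p$-summable. $E$ has the weak Cauchy subsequence property of order $p$ ($wCSP_p$) if every bounded sequence in $E$ has a weakly $p$-Cauchy subsequence. *)

theory Defs
  imports "HOL-Analysis.Analysis"
begin

definition lp :: "real \<Rightarrow> (nat \<Rightarrow> real) set" where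
  "lp p = {x. summable (\<lambda>i. \<bar>x i\<bar> powr p)}"

definition lp_norm :: "real \<Rightarrow> (nat \<Rightarrow> real) \<Rightarrow> real" where
  "lp_norm p x = (\<Sum>i. \<bar>x i\<bar> powr p) powr (1 / p)"

text \<open>The topological dual of l_p: continuous (= bounded) linear functionals on l_p.
  Only the values on l_p matter.\<close>

definition lp_dual :: "real \<Rightarrow> ((nat \<Rightarrow> real) \<Rightarrow> real) set" where
  "lp_dual p = {\<phi>.
     (\<forall>x\<in>lp p. \<forall>y\<in>lp p. \<phi> (\<lambda>i. x i + y i) = \<phi> x + \<phi> y) \<and>
     (\<forall>c. \<forall>x\<in>lp p. \<phi> (\<lambda>i. c * x i) = c * \<phi> x) \<and>
     (\<exists>C. \<forall>x\<in>lp p. \<bar>\<phi> x\<bar> \<le> C * lp_norm p x)}"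

definition weakly_summable :: "real \<Rightarrow> real \<Rightarrow> (nat \<Rightarrow> nat \<Rightarrow> real) \<Rightarrow> bool" where
  "weakly_summable p q x \<longleftrightarrow> (\<forall>\<phi>\<in>lp_dual p. summable (\<lambda>n. \<bar>\<phi> (x n)\<bar> powr q))"

definition weakly_Cauchy :: "real \<Rightarrow> real \<Rightarrow> (nat \<Rightarrow> nat \<Rightarrow> real) \<Rightarrow> bool" where
  "weakly_Cauchy p q x \<longleftrightarrow>
     (\<forall>k j. strict_mono k \<longrightarrow> strict_mono j \<longrightarrow>
        weakly_summable p q (\<lambda>n i. x (k n) i - x (j n) i))"

definition lp_wCSP :: "real \<Rightarrow> real \<Rightarrow> bool" where
  "lp_wCSP p q \<longleftrightarrow>
     (\<forall>x :: nat \<Rightarrow> nat \<Rightarrow> real. (\<forall>n. x n \<in> lp p) \<longrightarrow> (\<exists>M. \<forall>n. lp_norm p (x n) \<le> M) \<longrightarrow>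
        (\<exists>r :: nat \<Rightarrow> nat. strict_mono r \<and> weakly_Cauchy p q (x \<circ> r)))"

end

theory Submission
  imports Defs "HOL-Library.Diagonal_Subsequence"
begin

text \<open>For p < 2 the unit vectors have no weakly p-Cauchy subsequence: the differences of
  consecutive terms of a subsequence, tested against the functional with coefficients
  (n+1)^(-1/p) on one half of the indices (it lies in the dual because the conjugate exponent
  exceeds p), have p-th powers forming the harmonic series.

  For p \<ge> 2, a bounded sequence has a subsequence converging coordinatewise to some z in l_p.
  By a gliding-hump argument a further subsequence of x_n - z differs from a bounded sequence of
  disjointly supported vectors by a sequence whose p-th powers of norms are summable. Disjointly
  supported bounded sequences are weakly p-summable precisely because p \<ge> 2, weakly p-summable
  sequences are weakly p-Cauchy, and z cancels in the differences.\<close>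

definition lp_psum :: "real \<Rightarrow> (nat \<Rightarrow> real) \<Rightarrow> real" where
  "lp_psum p x = (\<Sum>i. \<bar>x i\<bar> powr p)"

lemma lp_norm_eq_psum: "lp_norm p x = lp_psum p x powr (1/p)"
  by (simp add: lp_norm_def lp_psum_def)

lemma lp_psum_nonneg: "x \<in> lp p \<Longrightarrow> 0 \<le> lp_psum p x"
  unfolding lp_psum_def lp_def by (auto intro!: suminf_nonneg)

lemma lp_psum_partial_le: "x \<in> lp p \<Longrightarrow> (\<Sum>i<N. \<bar>x i\<bar> powr p) \<le> lp_psum p x"
  unfolding lp_psum_def lp_def
  using sum_le_suminf[of "\<lambda>i. \<bar>x i\<bar> powr p" "{..<N}"] by auto

lemma lp_psum_term_le: "x \<in> lp p \<Longrightarrow> \<bar>x i\<bar> powr p \<le> lp_psum p x"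
  unfolding lp_psum_def lp_def
  using sum_le_suminf[of "\<lambda>i. \<bar>x i\<bar> powr p" "{i}"] by auto

lemma lp_psum_le_of_norm_le:
  assumes "p > 0" "x \<in> lp p" "lp_norm p x \<le> M"
  shows "lp_psum p x \<le> M powr p"
proof -
  have "lp_psum p x = lp_norm p x powr p"
    using assms lp_psum_nonneg[OF assms(2)] by (simp add: lp_norm_eq_psum powr_powr)
  also have "\<dots> \<le> M powr p"
    using assms by (intro powr_mono2) (auto simp: lp_norm_eq_psum)
  finally show ?thesis .
qed

lemma powr_abs_diff_le:
  fixes a b :: real assumes "p > 0"
  shows "\<bar>a - b\<bar> powr p \<le> 2 powr p * (\<bar>a\<bar> powr p + \<bar>b\<bar> powr p)"
proof -
  have "\<bar>a - b\<bar> powr p \<le> (2 * max \<bar>a\<bar> \<bar>b\<bar>) powr p"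
    using assms by (intro powr_mono2) auto
  also have "\<dots> = 2 powr p * max \<bar>a\<bar> \<bar>b\<bar> powr p"
    by (simp add: powr_mult)
  also have "max \<bar>a\<bar> \<bar>b\<bar> powr p \<le> \<bar>a\<bar> powr p + \<bar>b\<bar> powr p"
    by (cases "\<bar>a\<bar> \<le> \<bar>b\<bar>") (auto simp: max_def)
  finally show ?thesis by (simp add: mult_left_mono)
qed

lemma summable_powr_abs_diff:
  fixes a b :: "nat \<Rightarrow> real"
  assumes "q > 0" "summable (\<lambda>n. \<bar>a n\<bar> powr q)" "summable (\<lambda>n. \<bar>b n\<bar> powr q)"
  shows "summable (\<lambda>n. \<bar>a n - b n\<bar> powr q)"
  by (rule summable_comparison_test'[of "\<lambda>n. 2 powr q * (\<bar>a n\<bar> powr q + \<bar>b n\<bar> powr q)" 0])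
     (use assms powr_abs_diff_le in \<open>auto intro: summable_mult summable_add\<close>)

lemma lp_scale:
  assumes "x \<in> lp p"
  shows "(\<lambda>i. c * x i) \<in> lp p" and "lp_psum p (\<lambda>i. c * x i) = \<bar>c\<bar> powr p * lp_psum p x"
proof -
  have sx: "summable (\<lambda>i. \<bar>x i\<bar> powr p)" using assms by (auto simp: lp_def)
  have e: "\<And>i. \<bar>c * x i\<bar> powr p = \<bar>c\<bar> powr p * \<bar>x i\<bar> powr p"
    by (simp add: abs_mult powr_mult)
  show "(\<lambda>i. c * x i) \<in> lp p" using summable_mult[OF sx] by (simp add: lp_def e)
  show "lp_psum p (\<lambda>i. c * x i) = \<bar>c\<bar> powr p * lp_psum p x"
    by (simp add: lp_psum_def e suminf_mult[OF sx])
qed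

lemma lp_diff:
  assumes p: "p > 0" and x: "x \<in> lp p" and y: "y \<in> lp p"
  shows "(\<lambda>i. x i - y i) \<in> lp p"
    and "lp_psum p (\<lambda>i. x i - y i) \<le> 2 powr p * (lp_psum p x + lp_psum p y)"
proof -
  have sx: "summable (\<lambda>i. \<bar>x i\<bar> powr p)" and sy: "summable (\<lambda>i. \<bar>y i\<bar> powr p)"
    using x y by (auto simp: lp_def)
  have s: "summable (\<lambda>i. \<bar>x i - y i\<bar> powr p)"
    by (rule summable_powr_abs_diff[OF p sx sy])
  then show "(\<lambda>i. x i - y i) \<in> lp p" by (simp add: lp_def)
  have "lp_psum p (\<lambda>i. x i - y i) \<le> (\<Sum>i. 2 powr p * (\<bar>x i\<bar> powr p + \<bar>y i\<bar> powr p))"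
    unfolding lp_psum_def
    by (intro suminf_le s summable_mult summable_add sx sy powr_abs_diff_le p)
  also have "\<dots> = 2 powr p * (lp_psum p x + lp_psum p y)"
    by (simp add: lp_psum_def suminf_mult[OF summable_add[OF sx sy]] suminf_add[OF sx sy])
  finally show "lp_psum p (\<lambda>i. x i - y i) \<le> 2 powr p * (lp_psum p x + lp_psum p y)" .
qed

lemma lp_add: "p > 0 \<Longrightarrow> x \<in> lp p \<Longrightarrow> y \<in> lp p \<Longrightarrow> (\<lambda>i. x i + y i) \<in> lp p"
  using lp_diff(1)[of p x "\<lambda>i. (-1) * y i"] lp_scale(1)[of y p "-1"] by simp

lemma lp_finite_support:
  assumes "\<And>i. i \<ge> N \<Longrightarrow> x i = 0" and "p > 0"
  shows "x \<in> lp p" and "lp_psum p x = (\<Sum>i<N. \<bar>x i\<bar> powr p)"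
proof -
  have z: "\<And>i. i \<notin> {..<N} \<Longrightarrow> \<bar>x i\<bar> powr p = 0" using assms by auto
  show "x \<in> lp p" unfolding lp_def using sums_finite[of "{..<N}", OF _ z]
    by (auto simp: sums_iff)
  show "lp_psum p x = (\<Sum>i<N. \<bar>x i\<bar> powr p)" unfolding lp_psum_def
    using suminf_finite[of "{..<N}", OF _ z] by auto
qed

lemma lp_dual_diff:
  assumes \<phi>: "\<phi> \<in> lp_dual p" and a: "a \<in> lp p" and b: "b \<in> lp p"
  shows "\<phi> (\<lambda>i. a i - b i) = \<phi> a - \<phi> b"
proof -
  have add: "\<forall>x\<in>lp p. \<forall>y\<in>lp p. \<phi> (\<lambda>i. x i + y i) = \<phi> x + \<phi> y"
    and scale: "\<forall>c. \<forall>x\<in>lp p. \<phi> (\<lambda>i. c * x i) = c * \<phi> x"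
    using \<phi> by (auto simp: lp_dual_def)
  have "\<phi> (\<lambda>i. a i - b i) = \<phi> (\<lambda>i. a i + (-1) * b i)" by simp
  also have "\<dots> = \<phi> a + \<phi> (\<lambda>i. (-1) * b i)" by (rule add[rule_format, OF a lp_scale(1)[OF b]])
  also have "\<phi> (\<lambda>i. (-1) * b i) = - \<phi> b" using scale[rule_format, OF b, where c="-1"] by simp
  finally show ?thesis by simp
qed

lemma lp_dual_linear_combination:
  fixes b :: "nat \<Rightarrow> nat \<Rightarrow> real" and t :: "nat \<Rightarrow> real"
  assumes "p > 0" and \<phi>: "\<phi> \<in> lp_dual p" and b: "\<And>n. b n \<in> lp p"
  shows "(\<lambda>i. \<Sum>n<N. t n * b n i) \<in> lp p"
    and "\<phi> (\<lambda>i. \<Sum>n<N. t n * b n i) = (\<Sum>n<N. t n * \<phi> (b n))"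
proof -
  have add: "\<forall>x\<in>lp p. \<forall>y\<in>lp p. \<phi> (\<lambda>i. x i + y i) = \<phi> x + \<phi> y"
    and scale: "\<forall>c. \<forall>x\<in>lp p. \<phi> (\<lambda>i. c * x i) = c * \<phi> x"
    using \<phi> by (auto simp: lp_dual_def)
  have "(\<lambda>i. \<Sum>n<N. t n * b n i) \<in> lp p \<and> \<phi> (\<lambda>i. \<Sum>n<N. t n * b n i) = (\<Sum>n<N. t n * \<phi> (b n))"
  proof (induction N)
    case 0
    have "(\<lambda>i. 0) \<in> lp p" by (simp add: lp_def)
    then show ?case using scale[rule_format, where c=0] by simp
  next
    case (Suc N)
    then show ?case using add scale b lp_scale(1)[OF b] lp_add[OF \<open>p > 0\<close>] by simp
  qed
  then show "(\<lambda>i. \<Sum>n<N. t n * b n i) \<in> lp p"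
    and "\<phi> (\<lambda>i. \<Sum>n<N. t n * b n i) = (\<Sum>n<N. t n * \<phi> (b n))" by auto
qed

lemma lp_dual_bound:
  assumes "\<phi> \<in> lp_dual p"
  obtains C where "C \<ge> 0" "\<And>x. x \<in> lp p \<Longrightarrow> \<bar>\<phi> x\<bar> \<le> C * lp_psum p x powr (1/p)"
proof -
  obtain C where C: "\<forall>x\<in>lp p. \<bar>\<phi> x\<bar> \<le> C * lp_norm p x"
    using assms by (auto simp: lp_dual_def)
  have "\<bar>\<phi> x\<bar> \<le> max C 0 * lp_psum p x powr (1/p)" if "x \<in> lp p" for x
    using C that order_trans[OF _ mult_right_mono[OF max.cobounded1]]
    by (fastforce simp: lp_norm_eq_psum)
  then show ?thesis using that[of "max C 0"] by auto
qed

lemma lp_dual_powr_bound: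
  assumes "p > 0" "\<phi> \<in> lp_dual p"
  obtains C where "C \<ge> 0" "\<And>x. x \<in> lp p \<Longrightarrow> \<bar>\<phi> x\<bar> powr p \<le> C * lp_psum p x"
proof -
  obtain C where C0: "C \<ge> 0" and C: "\<And>x. x \<in> lp p \<Longrightarrow> \<bar>\<phi> x\<bar> \<le> C * lp_psum p x powr (1/p)"
    using lp_dual_bound[OF assms(2)] by blast
  have "\<bar>\<phi> x\<bar> powr p \<le> C powr p * lp_psum p x" if x: "x \<in> lp p" for x
  proof -
    have "\<bar>\<phi> x\<bar> powr p \<le> (C * lp_psum p x powr (1/p)) powr p"
      using C[OF x] assms(1) by (intro powr_mono2) auto
    also have "\<dots> = C powr p * lp_psum p x"
      using C0 lp_psum_nonneg[OF x] assms(1) by (simp add: powr_mult powr_powr)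
    finally show ?thesis .
  qed
  then show ?thesis using that[of "C powr p"] by auto
qed

lemma summable_Young:
  fixes p q :: real and c x :: "nat \<Rightarrow> real"
  assumes "1 < p" "1 < q" "1/p + 1/q = 1"
    and c: "summable (\<lambda>i. \<bar>c i\<bar> powr q)" and x: "summable (\<lambda>i. \<bar>x i\<bar> powr p)"
  shows "summable (\<lambda>i. \<bar>c i * x i\<bar>)"
    and "(\<Sum>i. \<bar>c i * x i\<bar>) \<le> (\<Sum>i. \<bar>c i\<bar> powr q) / q + (\<Sum>i. \<bar>x i\<bar> powr p) / p"
proof -
  have Y: "\<bar>c i * x i\<bar> \<le> \<bar>c i\<bar> powr q / q + \<bar>x i\<bar> powr p / p" for i
    using Youngs_inequality[of q p "\<bar>c i\<bar>" "\<bar>x i\<bar>"] assms by (simp add: abs_mult add.commute)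
  have s: "summable (\<lambda>i. \<bar>c i\<bar> powr q / q + \<bar>x i\<bar> powr p / p)"
    by (intro summable_add summable_divide c x)
  show s2: "summable (\<lambda>i. \<bar>c i * x i\<bar>)"
    by (rule summable_comparison_test'[OF s, of 0]) (use Y in auto)
  have "(\<Sum>i. \<bar>c i * x i\<bar>) \<le> (\<Sum>i. \<bar>c i\<bar> powr q / q + \<bar>x i\<bar> powr p / p)"
    by (intro suminf_le s s2 Y)
  also have "\<dots> = (\<Sum>i. \<bar>c i\<bar> powr q) / q + (\<Sum>i. \<bar>x i\<bar> powr p) / p"
    by (subst suminf_add[OF summable_divide[OF c] summable_divide[OF x], symmetric])
       (simp add: suminf_divide[OF c] suminf_divide[OF x])
  finally show "(\<Sum>i. \<bar>c i * x i\<bar>) \<le> (\<Sum>i. \<bar>c i\<bar> powr q) / q + (\<Sum>i. \<bar>x i\<bar> powr p) / p" .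
qed

lemma abs_suminf_mult_le_lp_norm:
  fixes c x :: "nat \<Rightarrow> real"
  assumes p: "1 < p" and q: "1 < q" "1/p + 1/q = 1"
    and c: "summable (\<lambda>i. \<bar>c i\<bar> powr q)" and x: "x \<in> lp p"
  shows "\<bar>\<Sum>i. c i * x i\<bar> \<le> ((\<Sum>i. \<bar>c i\<bar> powr q) / q + 1 / p) * lp_norm p x"
proof (cases "lp_psum p x = 0")
  case True
  then have "\<forall>i. \<bar>x i\<bar> powr p = 0"
    using x suminf_eq_zero_iff[of "\<lambda>i. \<bar>x i\<bar> powr p"] by (simp add: lp_def lp_psum_def)
  then have "x = (\<lambda>i. 0)" by auto
  then show ?thesis by (simp add: lp_norm_def)
next
  case False
  define N where "N = lp_norm p x"
  have N: "N > 0" using False lp_psum_nonneg[OF x] by (simp add: N_def lp_norm_eq_psum)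
  have NS: "N powr p = lp_psum p x"
    using N p lp_psum_nonneg[OF x] by (simp add: N_def lp_norm_eq_psum powr_powr)
  \<comment> \<open>Young's inequality is applied to the normalised vector \<open>x / N\<close>, whose p-sum is 1.\<close>
  define y where "y i = x i / N" for i
  have ey: "\<bar>y i\<bar> powr p = \<bar>x i\<bar> powr p / lp_psum p x" for i
    using N NS by (simp add: y_def powr_divide)
  have sx: "summable (\<lambda>i. \<bar>x i\<bar> powr p)" using x by (simp add: lp_def)
  have sy: "summable (\<lambda>i. \<bar>y i\<bar> powr p)" unfolding ey by (intro summable_divide sx)
  have py: "(\<Sum>i. \<bar>y i\<bar> powr p) = 1"
    using False by (simp add: ey suminf_divide[OF sx] lp_psum_def)
  have "\<bar>\<Sum>i. c i * x i\<bar> \<le> (\<Sum>i. \<bar>c i * x i\<bar>)"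
    by (intro summable_rabs summable_Young(1)[OF p q c sx])
  also have "\<dots> = (\<Sum>i. N * \<bar>c i * y i\<bar>)"
    using N by (simp add: y_def abs_mult)
  also have "\<dots> = N * (\<Sum>i. \<bar>c i * y i\<bar>)"
    by (simp add: suminf_mult[OF summable_Young(1)[OF p q c sy]])
  also have "\<dots> \<le> N * ((\<Sum>i. \<bar>c i\<bar> powr q) / q + 1 / p)"
    using summable_Young(2)[OF p q c sy] N py by simp
  finally show ?thesis by (simp add: N_def mult.commute)
qed

lemma lp_dual_sequence:
  fixes c :: "nat \<Rightarrow> real"
  assumes p: "1 < p" and c: "summable (\<lambda>i. \<bar>c i\<bar> powr (p / (p - 1)))"
  shows "(\<lambda>x. \<Sum>i. c i * x i) \<in> lp_dual p"
proof -
  define q where "q = p / (p - 1)"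
  have q: "1 < q" "1/p + 1/q = 1" using p by (auto simp: q_def field_simps)
  have summable: "summable (\<lambda>i. c i * x i)" if "x \<in> lp p" for x
    using summable_Young(1)[OF p q c[folded q_def]] that
    by (auto simp: lp_def intro: summable_rabs_cancel)
  have "(\<Sum>i. c i * (x i + y i)) = (\<Sum>i. c i * x i) + (\<Sum>i. c i * y i)"
    if "x \<in> lp p" "y \<in> lp p" for x y
    using suminf_add[OF summable summable, OF that] by (simp add: distrib_left)
  moreover have "(\<Sum>i. c i * (a * x i)) = a * (\<Sum>i. c i * x i)" if "x \<in> lp p" for a x
    using suminf_mult[OF summable[OF that], of a] by (simp add: mult.left_commute)
  moreover note abs_suminf_mult_le_lp_norm[OF p q c[folded q_def]]
  ultimately show ?thesis unfolding lp_dual_def by blast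
qed

lemma summable_comp_strict_mono:
  fixes f :: "nat \<Rightarrow> real"
  assumes k: "strict_mono k" and f0: "\<And>n. f n \<ge> 0" and f: "summable f"
  shows "summable (\<lambda>n. f (k n))"
proof -
  define f' where "f' n = (if n \<in> range k then f n else 0)" for n
  have "summable f'"
    by (rule summable_comparison_test'[OF f, of 0]) (auto simp: f'_def f0)
  then show ?thesis
    using summable_mono_reindex[OF k, of f'] by (auto simp: f'_def)
qed

lemma weakly_summable_comp_strict_mono:
  assumes "strict_mono k" "weakly_summable p q x"
  shows "weakly_summable p q (\<lambda>n. x (k n))"
  unfolding weakly_summable_def
proof
  fix \<phi> assume "\<phi> \<in> lp_dual p"
  then show "summable (\<lambda>n. \<bar>\<phi> (x (k n))\<bar> powr q)"
    using summable_comp_strict_mono[OF assms(1), of "\<lambda>n. \<bar>\<phi> (x n)\<bar> powr q"] assms(2)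
    by (simp add: weakly_summable_def)
qed

lemma weakly_summable_diff:
  assumes "q > 0" "\<And>n. x n \<in> lp p" "\<And>n. y n \<in> lp p"
    and "weakly_summable p q x" "weakly_summable p q y"
  shows "weakly_summable p q (\<lambda>n i. x n i - y n i)"
  using assms unfolding weakly_summable_def
  by (simp add: lp_dual_diff summable_powr_abs_diff)

lemma weakly_summable_imp_weakly_Cauchy:
  assumes "q > 0" "\<And>n. x n \<in> lp p" "weakly_summable p q x"
  shows "weakly_Cauchy p q x"
  unfolding weakly_Cauchy_def
  using assms by (simp add: weakly_summable_diff weakly_summable_comp_strict_mono)

lemma weakly_summable_of_summable_psum:
  assumes "p > 0" "\<And>n. x n \<in> lp p" "summable (\<lambda>n. lp_psum p (x n))"
  shows "weakly_summable p p x"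
  unfolding weakly_summable_def
proof
  fix \<phi> assume "\<phi> \<in> lp_dual p"
  then obtain C where "\<And>x. x \<in> lp p \<Longrightarrow> \<bar>\<phi> x\<bar> powr p \<le> C * lp_psum p x"
    using lp_dual_powr_bound[OF assms(1)] by blast
  then show "summable (\<lambda>n. \<bar>\<phi> (x n)\<bar> powr p)"
    using assms by (rule_tac summable_comparison_test'[of "\<lambda>n. C * lp_psum p (x n)" 0]) auto
qed

section \<open>Unit vectors for p < 2\<close>

definition unit_seq :: "nat \<Rightarrow> nat \<Rightarrow> real" where
  "unit_seq n = (\<lambda>i. if i = n then 1 else 0)"

lemma unit_seq_lp: "unit_seq n \<in> lp p" and lp_norm_unit_seq: "lp_norm p (unit_seq n) = 1"
proof -
  have e: "(\<lambda>i. \<bar>unit_seq n i\<bar> powr p) = (\<lambda>i. if i = n then 1 else 0)"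
    by (auto simp: unit_seq_def)
  show "unit_seq n \<in> lp p" "lp_norm p (unit_seq n) = 1"
    using sums_single[of n "\<lambda>_. 1::real"] by (simp_all add: lp_def lp_norm_def e sums_iff)
qed

lemma suminf_mult_unit_seq: "(\<Sum>i. c i * unit_seq n i) = c n"
  using sums_single[of n "\<lambda>_. c n"] by (simp add: unit_seq_def sums_iff if_distrib cong: if_cong)

lemma summable_shift_powr_iff: "summable (\<lambda>n. (real n + 1) powr s) \<longleftrightarrow> s < -1"
  using summable_Suc_iff[of "\<lambda>n. real n powr s"] summable_real_powr_iff[of s]
  by (simp add: add.commute)

lemma unit_seq_diffs_not_weakly_summable:
  assumes p: "1 < p" "p < 2" and a: "strict_mono a" and b: "\<And>n. b n \<notin> range a"
  shows "\<not> weakly_summable p p (\<lambda>n i. unit_seq (a n) i - unit_seq (b n) i)"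
proof
  assume W: "weakly_summable p p (\<lambda>n i. unit_seq (a n) i - unit_seq (b n) i)"
  define g where "g n = (real n + 1) powr (-1/p)" for n
  define c where "c i = (if i \<in> range a then g (inv a i) else 0)" for i
  have inj: "inj a" using a by (rule strict_mono_imp_inj_on)
  have c_a: "c (a n) = g n" and c_b: "c (b n) = 0" for n
    using inj b by (auto simp: c_def)
  have "summable (\<lambda>n. \<bar>c (a n)\<bar> powr (p / (p - 1)))"
  proof -
    have "\<bar>c (a n)\<bar> powr (p / (p - 1)) = (real n + 1) powr (- (1 / (p - 1)))" for n
      using p by (simp add: c_a g_def powr_powr)
    \<comment> \<open>This is where \<open>p < 2\<close> is used.\<close>
    moreover have "- (1 / (p - 1)) < -1" using p by (simp add: field_simps)
    ultimately show ?thesis by (simp add: summable_shift_powr_iff)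
  qed
  then have "summable (\<lambda>i. \<bar>c i\<bar> powr (p / (p - 1)))"
    using summable_mono_reindex[OF a, of "\<lambda>i. \<bar>c i\<bar> powr (p / (p - 1))"] by (auto simp: c_def)
  then have \<phi>: "(\<lambda>x. \<Sum>i. c i * x i) \<in> lp_dual p"
    using lp_dual_sequence[OF p(1)] by blast
  have "(\<Sum>i. c i * (unit_seq (a n) i - unit_seq (b n) i)) = g n" for n
    using lp_dual_diff[OF \<phi> unit_seq_lp unit_seq_lp]
    by (simp add: suminf_mult_unit_seq c_a c_b)
  then have "summable (\<lambda>n. \<bar>g n\<bar> powr p)"
    using W \<phi> unfolding weakly_summable_def by fastforce
  moreover have "\<bar>g n\<bar> powr p = (real n + 1) powr (-1)" for n
    using p by (simp add: g_def powr_powr)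
  ultimately show False using summable_shift_powr_iff[of "-1"] by simp
qed

lemma lp_wCSP_imp_ge_2:
  assumes "1 < p" "lp_wCSP p p"
  shows "2 \<le> p"
proof (rule ccontr)
  assume "\<not> 2 \<le> p"
  obtain r where r: "strict_mono r" and "weakly_Cauchy p p (unit_seq \<circ> r)"
    using assms(2) unit_seq_lp lp_norm_unit_seq unfolding lp_wCSP_def by (metis order_refl)
  moreover have "strict_mono (\<lambda>n::nat. 2 * n + 1)" "strict_mono (\<lambda>n::nat. 2 * n)"
    by (auto intro: strict_monoI)
  ultimately have "weakly_summable p p (\<lambda>n i. unit_seq (r (2 * n + 1)) i - unit_seq (r (2 * n)) i)"
    unfolding weakly_Cauchy_def by fastforce
  moreover have "strict_mono (\<lambda>n. r (2 * n + 1))" using r by (simp add: strict_mono_def)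
  moreover have "r (2 * n) \<notin> range (\<lambda>n. r (2 * n + 1))" for n
  proof
    assume "r (2 * n) \<in> range (\<lambda>n. r (2 * n + 1))"
    then obtain m where "r (2 * n) = r (2 * m + 1)" by auto
    then have "2 * n = 2 * m + 1" using strict_mono_eq[OF r] by blast
    then show False by presburger
  qed
  ultimately show False
    using unit_seq_diffs_not_weakly_summable[of p] assms(1) \<open>\<not> 2 \<le> p\<close> by auto
qed

section \<open>Bounded sequences for p \<ge> 2\<close>

lemma convergent_coordinates_subseq:
  fixes f :: "nat \<Rightarrow> nat \<Rightarrow> real"
  assumes "\<And>i. bounded (range (\<lambda>n. f n i))"
  obtains r where "strict_mono r" "\<And>i. convergent (\<lambda>n. f (r n) i)"
proof -
  interpret subseqs "\<lambda>i s. convergent (\<lambda>n. f (s n) i)"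
  proof
    fix i and s :: "nat \<Rightarrow> nat" assume "strict_mono s"
    have "bounded (range (\<lambda>n. f (s n) i))"
      using assms[of i] by (rule bounded_subset) auto
    then obtain l r where "strict_mono r" "((\<lambda>n. f (s n) i) \<circ> r) \<longlonglongrightarrow> l"
      using bounded_imp_convergent_subsequence by blast
    then show "\<exists>r. strict_mono r \<and> convergent (\<lambda>n. f ((s \<circ> r) n) i)"
      by (auto simp: convergent_def o_def)
  qed
  have "convergent (\<lambda>n. f (diagseq n) i)" for i
  proof -
    have "convergent (\<lambda>n. f ((diagseq \<circ> (+) (Suc i)) n) i)"
    proof (rule diagseq_holds)
      fix r s n assume "strict_mono (r :: nat \<Rightarrow> nat)" "convergent (\<lambda>k. f (s k) n)"
      then show "convergent (\<lambda>k. f ((s \<circ> r) k) n)"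
        using convergent_subseq_convergent[of "\<lambda>k. f (s k) n" r] by (simp add: o_def)
    qed
    then show ?thesis
      using convergent_ignore_initial_segment[of "\<lambda>n. f (diagseq n) i" "Suc i"]
      by (simp add: o_def add.commute)
  qed
  then show ?thesis using that subseq_diagseq by blast
qed

lemma lp_bounded_coordinatewise_convergent_subseq:
  fixes x :: "nat \<Rightarrow> nat \<Rightarrow> real"
  assumes p: "p > 0" and x: "\<And>n. x n \<in> lp p" and B: "\<And>n. lp_psum p (x n) \<le> B"
  obtains r z where "strict_mono r" "z \<in> lp p" "\<And>i. (\<lambda>n. x (r n) i) \<longlonglongrightarrow> z i"
proof -
  have "\<bar>x n i\<bar> \<le> B powr (1/p)" for n i
  proof -
    have "\<bar>x n i\<bar> = (\<bar>x n i\<bar> powr p) powr (1/p)" using p by (simp add: powr_powr)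
    also have "\<dots> \<le> B powr (1/p)"
      using order_trans[OF lp_psum_term_le[OF x] B] p by (intro powr_mono2) auto
    finally show ?thesis .
  qed
  then have "bounded (range (\<lambda>n. x n i))" for i by (auto simp: bounded_real)
  then obtain r where r: "strict_mono r" and cv: "\<And>i. convergent (\<lambda>n. x (r n) i)"
    using convergent_coordinates_subseq by blast
  define z where "z i = lim (\<lambda>n. x (r n) i)" for i
  have z: "(\<lambda>n. x (r n) i) \<longlonglongrightarrow> z i" for i
    using cv[of i] by (simp add: z_def convergent_LIMSEQ_iff)
  have "(\<Sum>i<N. \<bar>z i\<bar> powr p) \<le> B" for N
  proof (rule LIMSEQ_le_const2)
    show "(\<lambda>n. \<Sum>i<N. \<bar>x (r n) i\<bar> powr p) \<longlonglongrightarrow> (\<Sum>i<N. \<bar>z i\<bar> powr p)"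
      using p by (intro tendsto_sum tendsto_powr' tendsto_rabs z tendsto_const) auto
    show "\<exists>N0. \<forall>n\<ge>N0. (\<Sum>i<N. \<bar>x (r n) i\<bar> powr p) \<le> B"
      using order_trans[OF lp_psum_partial_le[OF x] B] by blast
  qed
  then have "z \<in> lp p"
    unfolding lp_def by (auto intro!: summableI_nonneg_bounded)
  then show ?thesis using that r z by blast
qed

lemma gliding_hump_step:
  fixes G :: "nat \<Rightarrow> nat \<Rightarrow> real"
  assumes summable: "\<And>n. summable (G n)" and null: "\<And>i. (\<lambda>n. G n i) \<longlonglongrightarrow> 0" and \<epsilon>: "\<epsilon> > 0"
  shows "\<exists>k' b. k < k' \<and> a < b \<and> (\<Sum>i<a. G k' i) \<le> \<epsilon> \<and> (\<Sum>i. G k' (i + b)) \<le> \<epsilon>"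
proof -
  have "(\<lambda>k. \<Sum>i<a. G k i) \<longlonglongrightarrow> (\<Sum>i<a. 0)"
    by (intro tendsto_sum null)
  then have "eventually (\<lambda>k. (\<Sum>i<a. G k i) < \<epsilon>) sequentially"
    using \<epsilon> by (intro order_tendstoD(2)) auto
  then obtain K where K: "\<And>k'. k' \<ge> K \<Longrightarrow> (\<Sum>i<a. G k' i) < \<epsilon>"
    by (auto simp: eventually_sequentially)
  define k' where "k' = max K (Suc k)"
  obtain M where M: "\<forall>b\<ge>M. norm (\<Sum>i. G k' (i + b)) < \<epsilon>"
    using suminf_exist_split[OF \<epsilon> summable] by blast
  have "k < k' \<and> a < max M (Suc a) \<and> (\<Sum>i<a. G k' i) \<le> \<epsilon> \<and> (\<Sum>i. G k' (i + max M (Suc a))) \<le> \<epsilon>"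
    using K[of k'] M[rule_format, of "max M (Suc a)"] by (auto simp: k'_def less_max_iff_disj)
  then show ?thesis by blast
qed

lemma gliding_hump:
  fixes G :: "nat \<Rightarrow> nat \<Rightarrow> real" and \<epsilon> :: "nat \<Rightarrow> real"
  assumes summable: "\<And>n. summable (G n)" and null: "\<And>i. (\<lambda>n. G n i) \<longlonglongrightarrow> 0"
    and \<epsilon>: "\<And>n. \<epsilon> n > 0"
  obtains s m where "strict_mono s" "strict_mono m"
    "\<And>n. (\<Sum>i<m n. G (s n) i) \<le> \<epsilon> n" "\<And>n. (\<Sum>i. G (s n) (i + m (Suc n))) \<le> \<epsilon> n"
proof -
  \<comment> \<open>The triple \<open>(m n, s n, m (Suc n))\<close> is chosen recursively.\<close>
  define P where "P n x \<longleftrightarrow> fst x < snd (snd x) \<and> (\<Sum>i<fst x. G (fst (snd x)) i) \<le> \<epsilon> n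
      \<and> (\<Sum>i. G (fst (snd x)) (i + snd (snd x))) \<le> \<epsilon> n" for n x
  have "\<exists>f. \<forall>n. P n (f n) \<and> fst (f (Suc n)) = snd (snd (f n)) \<and> fst (snd (f n)) < fst (snd (f (Suc n)))"
  proof (rule dependent_nat_choice)
    obtain k b where "0 < b" "(\<Sum>i. G k (i + b)) \<le> \<epsilon> 0"
      using gliding_hump_step[OF summable null \<epsilon>[of 0], where k=0 and a=0] by auto
    then show "\<exists>x. P 0 x" by (intro exI[of _ "(0, k, b)"]) (simp add: P_def less_imp_le[OF \<epsilon>])
    show "\<exists>y. P (Suc n) y \<and> fst y = snd (snd x) \<and> fst (snd x) < fst (snd y)" for x n
      using gliding_hump_step[OF summable null \<epsilon>[of "Suc n"], where a="snd (snd x)" and k="fst (snd x)"] by (auto simp: P_def)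
  qed
  then obtain f where f: "\<And>n. P n (f n)" and f_Suc: "\<And>n. fst (f (Suc n)) = snd (snd (f n))"
    and f_mono: "\<And>n. fst (snd (f n)) < fst (snd (f (Suc n)))"
    by blast
  show ?thesis
  proof (rule that[of "\<lambda>n. fst (snd (f n))" "\<lambda>n. fst (f n)"])
    show "strict_mono (\<lambda>n. fst (snd (f n)))" by (intro strict_monoI_Suc f_mono)
    show "strict_mono (\<lambda>n. fst (f n))"
      using f by (intro strict_monoI_Suc) (simp add: P_def f_Suc)
  qed (use f in \<open>simp_all add: P_def f_Suc\<close>)
qed

lemma le_powr_conjugate_if_le_mult_powr:
  fixes S A p :: real
  assumes p: "1 < p" and S: "0 \<le> S" and A: "0 \<le> A" and le: "S \<le> A * S powr (1/p)"
  shows "S \<le> A powr (p / (p - 1))"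
proof (cases "S = 0")
  case False
  then have S_pos: "S > 0" using S by simp
  have "S powr (1/p) * S powr (1 - 1/p) \<le> S powr (1/p) * A"
    using le S_pos by (simp add: powr_add[symmetric] mult.commute)
  then have "S powr (1 - 1/p) \<le> A" using S_pos by simp
  moreover have "(1 - 1/p) * (p / (p - 1)) = 1" using p by (simp add: field_simps)
  ultimately have "(S powr (1 - 1/p)) powr (p / (p - 1)) \<le> A powr (p / (p - 1))"
    using p by (intro powr_mono2) auto
  also have "(S powr (1 - 1/p)) powr (p / (p - 1)) = S"
    using S_pos p \<open>(1 - 1/p) * (p / (p - 1)) = 1\<close> by (simp add: powr_powr)
  finally show ?thesis .
qed simp

lemma abs_sum_powr_disjoint:
  fixes a :: "nat \<Rightarrow> real"
  assumes "\<And>n n'. n \<noteq> n' \<Longrightarrow> a n = 0 \<or> a n' = 0"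
  shows "\<bar>\<Sum>n<N. a n\<bar> powr p = (\<Sum>n<N. \<bar>a n\<bar> powr p)"
proof (induction N)
  case (Suc N)
  show ?case
  proof (cases "a N = 0")
    case False
    then have "\<forall>n<N. a n = 0" using assms by (metis less_irrefl)
    then show ?thesis by simp
  qed (use Suc in simp)
qed simp

lemma abs_powr_le_mult_square:
  fixes t K p :: real
  assumes p: "2 \<le> p" and t: "\<bar>t\<bar> \<le> K"
  shows "\<bar>t\<bar> powr p \<le> K powr (p - 2) * t\<^sup>2"
proof (cases "t = 0")
  case False
  have "\<bar>t\<bar> powr p = \<bar>t\<bar> powr (p - 2) * \<bar>t\<bar> powr 2"
    unfolding powr_add[symmetric] by simp
  also have "\<bar>t\<bar> powr 2 = t\<^sup>2" using False by (simp add: powr_numeral)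
  also have "\<bar>t\<bar> powr (p - 2) \<le> K powr (p - 2)"
    using p t by (intro powr_mono2) auto
  finally show ?thesis by (simp add: mult_right_mono)
qed (use p in simp)

lemma lp_psum_disjoint_combination:
  fixes b :: "nat \<Rightarrow> nat \<Rightarrow> real" and t :: "nat \<Rightarrow> real"
  assumes disj: "\<And>n n' i. n \<noteq> n' \<Longrightarrow> b n i = 0 \<or> b n' i = 0" and b: "\<And>n. b n \<in> lp p"
  shows "lp_psum p (\<lambda>i. \<Sum>n<N. t n * b n i) = (\<Sum>n<N. \<bar>t n\<bar> powr p * lp_psum p (b n))"
proof -
  have "lp_psum p (\<lambda>i. \<Sum>n<N. t n * b n i) = (\<Sum>i. \<Sum>n<N. \<bar>t n * b n i\<bar> powr p)"
    unfolding lp_psum_def by (intro suminf_cong abs_sum_powr_disjoint) (use disj in auto)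
  also have "\<dots> = (\<Sum>n<N. \<Sum>i. \<bar>t n * b n i\<bar> powr p)"
    by (rule suminf_sum) (use lp_scale(1)[OF b] in \<open>auto simp: lp_def\<close>)
  also have "\<dots> = (\<Sum>n<N. \<bar>t n\<bar> powr p * lp_psum p (b n))"
    using lp_scale(2)[OF b] by (simp add: lp_psum_def)
  finally show ?thesis .
qed

text \<open>This is where p \<ge> 2 enters. Disjointly supported vectors with lp_psum at most D satisfy the
  upper estimate lp_psum (\<Sum> t_n b_n) \<le> D \<Sum> |t_n|^p. Testing \<phi> on \<Sum> t_n b_n with t_n = \<phi> b_n
  and using |t|^p \<le> K^(p-2) t^2 (where |\<phi> b_n| \<le> K) bounds S = \<Sum> |\<phi> b_n|^p by a multiple
  of S^(1/p).\<close>

lemma weakly_summable_disjoint: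
  fixes b :: "nat \<Rightarrow> nat \<Rightarrow> real"
  assumes p: "2 \<le> p" and disj: "\<And>n n' i. n \<noteq> n' \<Longrightarrow> b n i = 0 \<or> b n' i = 0"
    and b: "\<And>n. b n \<in> lp p" and D: "\<And>n. lp_psum p (b n) \<le> D"
  shows "weakly_summable p p b"
  unfolding weakly_summable_def
proof
  fix \<phi> assume \<phi>: "\<phi> \<in> lp_dual p"
  have p0: "p > 0" using p by simp
  have D0: "D \<ge> 0" using order_trans[OF lp_psum_nonneg[OF b] D] .
  obtain C where C0: "C \<ge> 0" and C: "\<And>x. x \<in> lp p \<Longrightarrow> \<bar>\<phi> x\<bar> \<le> C * lp_psum p x powr (1/p)"
    using lp_dual_bound[OF \<phi>] by blast
  define K where "K = C * D powr (1/p)"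
  have K: "\<bar>\<phi> (b n)\<bar> \<le> K" for n
    using order_trans[OF C[OF b] mult_left_mono[OF powr_mono2[OF _ lp_psum_nonneg[OF b] D] C0]] p0
    by (simp add: K_def)
  define A where "A = K powr (p - 2) * C * D powr (1/p)"
  have "(\<Sum>n<N. \<bar>\<phi> (b n)\<bar> powr p) \<le> A powr (p / (p - 1))" for N
  proof -
    define S where "S = (\<Sum>n<N. \<bar>\<phi> (b n)\<bar> powr p)"
    define z where "z = (\<lambda>i. \<Sum>n<N. \<phi> (b n) * b n i)"
    have z: "z \<in> lp p" "\<phi> z = (\<Sum>n<N. (\<phi> (b n))\<^sup>2)"
      using lp_dual_linear_combination[OF p0 \<phi> b, of "\<lambda>n. \<phi> (b n)"]
      by (simp_all add: z_def power2_eq_square)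
    have "lp_psum p z = (\<Sum>n<N. \<bar>\<phi> (b n)\<bar> powr p * lp_psum p (b n))"
      unfolding z_def by (rule lp_psum_disjoint_combination[OF disj b])
    also have "\<dots> \<le> (\<Sum>n<N. \<bar>\<phi> (b n)\<bar> powr p * D)"
      by (intro sum_mono mult_left_mono D) auto
    finally have z_psum: "lp_psum p z \<le> D * S" by (simp add: S_def sum_distrib_left mult.commute)
    have "S \<le> (\<Sum>n<N. K powr (p - 2) * (\<phi> (b n))\<^sup>2)"
      unfolding S_def by (intro sum_mono abs_powr_le_mult_square p K)
    also have "\<dots> = K powr (p - 2) * \<phi> z"
      by (simp add: z sum_distrib_left)
    also have "\<dots> \<le> K powr (p - 2) * (C * (D * S) powr (1/p))"
    proof (rule mult_left_mono)
      have "\<phi> z \<le> C * lp_psum p z powr (1/p)" using C[OF z(1)] by simp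
      also have "\<dots> \<le> C * (D * S) powr (1/p)"
        using z_psum lp_psum_nonneg[OF z(1)] C0 p0 by (intro mult_left_mono powr_mono2) auto
      finally show "\<phi> z \<le> C * (D * S) powr (1/p)" .
    qed simp
    also have "\<dots> = A * S powr (1/p)"
      using D0 by (simp add: A_def S_def powr_mult sum_nonneg)
    finally have "S \<le> A * S powr (1/p)" .
    moreover have "0 \<le> A" using C0 D0 by (simp add: A_def K_def)
    ultimately show ?thesis
      using le_powr_conjugate_if_le_mult_powr[of p S A] p by (simp add: S_def sum_nonneg)
  qed
  then show "summable (\<lambda>n. \<bar>\<phi> (b n)\<bar> powr p)"
    by (intro summableI_nonneg_bounded) auto
qed

lemma lp_gliding_hump:
  fixes y :: "nat \<Rightarrow> nat \<Rightarrow> real"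
  assumes p: "p > 0" and y: "\<And>n. y n \<in> lp p" and D: "\<And>n. lp_psum p (y n) \<le> D"
    and null: "\<And>i. (\<lambda>n. y n i) \<longlonglongrightarrow> 0"
  obtains s b where "strict_mono s" "\<And>n n' i. n \<noteq> n' \<Longrightarrow> b n i = 0 \<or> b n' i = 0"
    "\<And>n. b n \<in> lp p" "\<And>n. lp_psum p (b n) \<le> D"
    "summable (\<lambda>n. lp_psum p (\<lambda>i. b n i - y (s n) i))"
proof -
  obtain s m where s: "strict_mono s" and m: "strict_mono m"
    and head: "\<And>n. (\<Sum>i<m n. \<bar>y (s n) i\<bar> powr p) \<le> (1/2) ^ n"
    and tail: "\<And>n. (\<Sum>i. \<bar>y (s n) (i + m (Suc n))\<bar> powr p) \<le> (1/2) ^ n"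
  proof (rule gliding_hump[where G="\<lambda>n i. \<bar>y n i\<bar> powr p" and \<epsilon>="\<lambda>n. (1/2) ^ n"])
    show "summable (\<lambda>i. \<bar>y n i\<bar> powr p)" for n using y[of n] by (simp add: lp_def)
    show "(\<lambda>n. \<bar>y n i\<bar> powr p) \<longlonglongrightarrow> 0" for i
      using tendsto_powr'[OF tendsto_rabs[OF null] tendsto_const, of p] p by simp
  qed (use that in auto)
  define b where "b n i = (if m n \<le> i \<and> i < m (Suc n) then y (s n) i else 0)" for n i
  have "b n i = 0 \<or> b n' i = 0" if "n < n'" for n n' i
    using strict_mono_less_eq[OF m, of "Suc n" n'] that by (auto simp: b_def)
  then have disj: "b n i = 0 \<or> b n' i = 0" if "n \<noteq> n'" for n n' i
    using that by (metis linorder_neqE_nat)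
  have b: "b n \<in> lp p" and b_psum: "lp_psum p (b n) = (\<Sum>i<m (Suc n). \<bar>b n i\<bar> powr p)" for n
    using lp_finite_support[of "m (Suc n)" "b n", OF _ p] by (auto simp: b_def)
  have "lp_psum p (b n) \<le> D" for n
  proof -
    have "lp_psum p (b n) \<le> (\<Sum>i<m (Suc n). \<bar>y (s n) i\<bar> powr p)"
      unfolding b_psum by (intro sum_mono) (auto simp: b_def)
    also have "\<dots> \<le> D" using order_trans[OF lp_psum_partial_le[OF y] D] .
    finally show ?thesis .
  qed
  moreover have "summable (\<lambda>n. lp_psum p (\<lambda>i. b n i - y (s n) i))"
  proof (rule summable_comparison_test'[of "\<lambda>n. 2 * (1/2) ^ n" 0])
    fix n
    define d where "d = (\<lambda>i. b n i - y (s n) i)"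
    have d: "d \<in> lp p" unfolding d_def by (rule lp_diff(1)[OF p b y])
    have d_abs: "\<bar>d i\<bar> powr p = (if m n \<le> i \<and> i < m (Suc n) then 0 else \<bar>y (s n) i\<bar> powr p)" for i
      by (simp add: d_def b_def)
    have "m n \<le> m (Suc n)" using m by (simp add: strict_mono_less_eq)
    then have head_d: "(\<Sum>i<m (Suc n). \<bar>d i\<bar> powr p) = (\<Sum>i<m n. \<bar>y (s n) i\<bar> powr p)"
      using sum.inter_restrict[of "{..<m (Suc n)}" "\<lambda>i. \<bar>y (s n) i\<bar> powr p" "{..<m n}"]
      by (simp add: d_abs Int_absorb1) (intro sum.cong; auto)
    have "lp_psum p d = (\<Sum>i. \<bar>d (i + m (Suc n))\<bar> powr p) + (\<Sum>i<m (Suc n). \<bar>d i\<bar> powr p)"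
      unfolding lp_psum_def using d by (intro suminf_split_initial_segment) (simp add: lp_def)
    also have "\<dots> \<le> 2 * (1/2) ^ n"
      using tail[of n] head[of n] head_d by (simp add: d_abs)
    finally show "norm (lp_psum p (\<lambda>i. b n i - y (s n) i)) \<le> 2 * (1/2) ^ n"
      using lp_psum_nonneg[OF d] by (simp add: d_def)
  qed (auto intro: summable_mult summable_geometric)
  ultimately show ?thesis using that s disj b by blast
qed

lemma ge_2_imp_lp_wCSP:
  assumes p: "2 \<le> p"
  shows "lp_wCSP p p"
  unfolding lp_wCSP_def
proof (intro allI impI)
  fix x :: "nat \<Rightarrow> nat \<Rightarrow> real"
  assume "\<forall>n. x n \<in> lp p" and "\<exists>M. \<forall>n. lp_norm p (x n) \<le> M"
  then obtain M where x: "\<And>n. x n \<in> lp p" and M: "\<And>n. lp_norm p (x n) \<le> M" by blast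
  have p0: "p > 0" using p by simp
  have B: "lp_psum p (x n) \<le> M powr p" for n
    by (rule lp_psum_le_of_norm_le[OF p0 x M])
  obtain r z where r: "strict_mono r" and z: "z \<in> lp p" and lim: "\<And>i. (\<lambda>n. x (r n) i) \<longlonglongrightarrow> z i"
    using lp_bounded_coordinatewise_convergent_subseq[where x=x, OF p0 x B] by blast
  define y where "y n = (\<lambda>i. x (r n) i - z i)" for n
  have y: "y n \<in> lp p" for n unfolding y_def using lp_diff(1)[OF p0 _ z] x by blast
  have y_bounded: "lp_psum p (y n) \<le> 2 powr p * (M powr p + lp_psum p z)" for n
    unfolding y_def using order_trans[OF lp_diff(2)[OF p0 _ z]] x B by (simp add: mult_left_mono)
  have y_null: "(\<lambda>n. y n i) \<longlonglongrightarrow> 0" for i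
    using tendsto_diff[OF lim[of i] tendsto_const[of "z i"]] by (simp add: y_def)
  obtain s b where s: "strict_mono s"
    and disj: "\<And>n n' i. n \<noteq> n' \<Longrightarrow> b n i = 0 \<or> b n' i = 0" and b: "\<And>n. b n \<in> lp p"
    and b_bounded: "\<And>n. lp_psum p (b n) \<le> 2 powr p * (M powr p + lp_psum p z)"
    and close: "summable (\<lambda>n. lp_psum p (\<lambda>i. b n i - y (s n) i))"
    using lp_gliding_hump[where y=y, OF p0 y y_bounded y_null] by blast
  have bs: "weakly_summable p p b"
    by (rule weakly_summable_disjoint[OF p disj b b_bounded])
  have d: "\<And>n. (\<lambda>i. b n i - y (s n) i) \<in> lp p"
    by (rule lp_diff(1)[OF p0 b y])
  have ds: "weakly_summable p p (\<lambda>n i. b n i - y (s n) i)"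
    by (rule weakly_summable_of_summable_psum[OF p0 d close])
  have "weakly_summable p p (\<lambda>n i. b n i - (b n i - y (s n) i))"
    by (rule weakly_summable_diff[OF p0 b d bs ds])
  then have "weakly_summable p p (\<lambda>n. y (s n))" by simp
  then have "weakly_Cauchy p p (\<lambda>n. y (s n))"
    by (rule weakly_summable_imp_weakly_Cauchy[OF p0 y])
  then have "weakly_Cauchy p p (x \<circ> (r \<circ> s))"
    by (simp add: weakly_Cauchy_def y_def)
  then show "\<exists>r. strict_mono r \<and> weakly_Cauchy p p (x \<circ> r)"
    using strict_mono_o[OF r s] by blast
qed

theorem propositionp:
  fixes p :: real
  assumes "1 < p"
  shows "lp_wCSP p p \<longleftrightarrow> p \<ge> 2"
  using lp_wCSP_imp_ge_2[OF assms] ge_2_imp_lp_wCSP by blast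

end
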